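(* For every complex number $s$ with $\operatorname{Re}(s)>2$, $$\sum_{n\ge1}\frac{\tau(n)\delta(n)}{n^s}=2\,\zeta(s-1)^2\,F(s-1).$$
   Context: The arithmetic derivative $\delta$ is defined by $\delta(p)=1$ for every prime $p$ and $\delta(mn)=m\delta(n)+n\delta(m)$ for all positive integers $m,n$; equivalently $\delta(1)=0$ and $\delta(n)=n\sum_{p^\alpha\| n}\alpha/p$. $\tau(n)$ is the number of positive divisors of $n$, $\zeta$ is the Riemann zeta function and $F(s)=\sum_{p\text{ prime}}\frac{1}{p^{s+1}-p}$. *)

theory Defs
  imports "HOL-Analysis.Analysis" "HOL-Computational_Algebra.Primes"
begin

text \<open>Arithmetic derivative: delta(n) = n * sum over p^a || n of a/p; delta(0) = 0 by convention
  (only n >= 1 is used).\<close>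
definition arith_deriv :: "nat \<Rightarrow> nat" where
  "arith_deriv n = (\<Sum>p\<in>prime_factors n. multiplicity p n * (n div p))"

definition divisor_count :: "nat \<Rightarrow> nat" where
  "divisor_count n = card {d. d dvd n \<and> d > 0}"

text \<open>Riemann zeta function, given by its Dirichlet series (used only for Re s > 1,
  where this is the usual definition).\<close>
definition riemann_zeta :: "complex \<Rightarrow> complex" where
  "riemann_zeta s = (\<Sum>n. 1 / (of_nat (Suc n) powr s))"

definition F_prime :: "complex \<Rightarrow> complex" where
  "F_prime s = (\<Sum>\<^sub>\<infinity>p\<in>{p::nat. prime p}. 1 / (of_nat p powr (s + 1) - of_nat p))"

end

theory Submission
  imports Defs
begin

text \<open>Put \<open>w = s - 1\<close>. For \<open>Re w > 1\<close>, \<open>F(w)\<close> is the absolutely convergent double sum of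
  \<open>p\<^sup>-\<^sup>1 (p\<^sup>k)\<^sup>-\<^sup>w\<close> over primes \<open>p\<close> and \<open>k \<ge> 1\<close>, so \<open>F(w) \<zeta>(w)\<^sup>2\<close> is the sum of
  \<open>p\<^sup>-\<^sup>1 (p\<^sup>k m\<^sub>1 m\<^sub>2)\<^sup>-\<^sup>w\<close> over all \<open>p, k, m\<^sub>1, m\<^sub>2\<close>. Group the terms by \<open>N = p\<^sup>k m\<^sub>1 m\<^sub>2\<close>.
  For a fixed prime \<open>p\<close>, the triples \<open>(k, m\<^sub>1, m\<^sub>2)\<close> correspond via \<open>d = p\<^sup>k m\<^sub>1\<close> to the pairs
  \<open>(d, k)\<close> with \<open>d | N\<close> and \<open>1 \<le> k \<le> v\<^sub>p(d)\<close>, and pairing \<open>d\<close> with \<open>N/d\<close> shows that there are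
  \<open>\<tau>(N) v\<^sub>p(N)/2\<close> of them. As \<open>\<delta>(N)/N = \<Sum>\<^sub>p v\<^sub>p(N)/p\<close>, the coefficient of \<open>N\<^sup>-\<^sup>w\<close> is
  \<open>\<tau>(N) \<delta>(N) / (2N)\<close>.\<close>

lemma of_nat_mult_powr: "of_nat (m * n) powr (w::complex) = of_nat m powr w * of_nat n powr w"
  by (simp add: powr_times_real)

lemma norm_inverse_of_nat_powr: "norm (1 / of_nat n powr (w::complex)) = real n powr - Re w"
  by (simp add: norm_divide norm_powr_real_powr powr_minus_divide)

lemma has_sum_shift_Suc:
  "((\<lambda>n. f (Suc n)) has_sum S) UNIV \<longleftrightarrow> (f has_sum S) {1..}"
  by (rule has_sum_reindex_bij_witness[where j=Suc and i="\<lambda>m. m - 1"]) auto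

lemma has_sum_Sigma_finite_fibres:
  fixes f :: "'a \<times> 'b \<Rightarrow> 'c :: {comm_monoid_add, uniform_space, uniform_topological_group_add}"
  assumes "(f has_sum S) (Sigma A B)" "\<And>x. x \<in> A \<Longrightarrow> finite (B x)"
  shows "((\<lambda>x. \<Sum>y\<in>B x. f (x, y)) has_sum S) A"
  using assms by (intro has_sum_Sigma'[OF assms(1)] has_sum_finite)

lemma has_sum_mult_abs_summable:
  fixes f g :: "_ \<Rightarrow> 'a :: {real_normed_div_algebra, banach}"
  assumes fa: "(f has_sum a) A" and gb: "(g has_sum b) B"
    and f_abs: "(\<lambda>x. norm (f x)) summable_on A" and g_abs: "(\<lambda>y. norm (g y)) summable_on B"
  shows "((\<lambda>(x, y). f x * g y) has_sum a * b) (A \<times> B)"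
    and "(\<lambda>(x, y). norm (f x * g y)) summable_on A \<times> B"
proof -
  have "((\<lambda>y. norm (f x) * norm (g y)) has_sum norm (f x) * (\<Sum>\<^sub>\<infinity>y\<in>B. norm (g y))) B" for x
    using g_abs by (intro has_sum_cmult_right has_sum_infsum)
  then show abs: "(\<lambda>(x, y). norm (f x * g y)) summable_on A \<times> B"
    using f_abs
    by (intro summable_on_SigmaI[where g="\<lambda>x. norm (f x) * (\<Sum>\<^sub>\<infinity>y\<in>B. norm (g y))"]
          summable_on_cmult_left) (auto simp: norm_mult)
  show "((\<lambda>(x, y). f x * g y) has_sum a * b) (A \<times> B)"
  proof (rule has_sum_SigmaI)
    show "((\<lambda>y. case (x, y) of (x, y) \<Rightarrow> f x * g y) has_sum f x * b) B" for x
      using has_sum_cmult_right[OF gb] by simp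
    show "((\<lambda>x. f x * b) has_sum a * b) A"
      using fa by (rule has_sum_cmult_left)
    show "(\<lambda>(x, y). f x * g y) summable_on A \<times> B"
      using abs_summable_summable[of "\<lambda>(x, y). f x * g y"] abs by (simp add: case_prod_unfold)
  qed
qed

lemma riemann_zeta_has_sum:
  assumes "Re w > 1"
  shows "((\<lambda>n::nat. 1 / of_nat n powr w) has_sum riemann_zeta w) {1..}"
    and "(\<lambda>n::nat. norm (1 / of_nat n powr w)) summable_on {1..}"
proof -
  have "summable (\<lambda>n::nat. real n powr - Re w)"
    using assms by (subst summable_real_powr_iff) simp
  then have "(\<lambda>n::nat. real n powr - Re w) summable_on UNIV"
    by (subst summable_on_UNIV_nonneg_real_iff) auto
  then show abs: "(\<lambda>n::nat. norm (1 / of_nat n powr w)) summable_on {1..}"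
    unfolding norm_inverse_of_nat_powr by (rule summable_on_subset_banach) auto
  have "((\<lambda>n::nat. 1 / of_nat n powr w) has_sum (\<Sum>\<^sub>\<infinity>n\<in>{1..}. 1 / of_nat n powr w)) {1..}"
    using abs_summable_summable[OF abs] by (rule has_sum_infsum)
  moreover from this have "(\<lambda>n. 1 / of_nat (Suc n) powr w) sums (\<Sum>\<^sub>\<infinity>n\<in>{1..}. 1 / of_nat n powr w)"
    by (intro has_sum_imp_sums has_sum_shift_Suc[THEN iffD2])
  then have "riemann_zeta w = (\<Sum>\<^sub>\<infinity>n\<in>{1..}. 1 / of_nat n powr w)"
    by (simp add: riemann_zeta_def sums_iff)
  ultimately show "((\<lambda>n::nat. 1 / of_nat n powr w) has_sum riemann_zeta w) {1..}"
    by simp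
qed

lemma prime_power_series_has_sum:
  fixes w :: complex
  assumes "p > 1" "Re w > 0"
  shows "((\<lambda>k. 1 / of_nat p / of_nat (p ^ k) powr w) has_sum 1 / (of_nat p powr (w + 1) - of_nat p)) {1..}"
proof -
  define x where "x = 1 / of_nat p powr w"
  have "norm x < 1"
    using assms by (simp add: x_def norm_inverse_of_nat_powr powr_less_one)
  then have "((\<lambda>k. 1 / of_nat p * x ^ k) has_sum 1 / of_nat p * (x / (1 - x))) {1..}"
    by (intro has_sum_cmult_right has_sum_geometric_from_1)
  moreover have "x ^ k = 1 / of_nat (p ^ k) powr w" for k
    by (induction k) (simp_all add: x_def of_nat_mult_powr del: of_nat_mult)
  moreover have "1 / of_nat p * (x / (1 - x)) = 1 / (of_nat p powr (w + 1) - of_nat p)"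
    using assms \<open>norm x < 1\<close> by (auto simp: x_def powr_add field_simps)
  ultimately show ?thesis
    by simp
qed

lemma F_prime_has_sum:
  assumes "Re w > 1"
  shows "((\<lambda>(p, k). 1 / of_nat p / of_nat (p ^ k) powr w) has_sum F_prime w) ({p. prime p} \<times> {1..})"
    and "(\<lambda>(p, k). norm (1 / of_nat p / of_nat (p ^ k) powr w)) summable_on ({p. prime p} \<times> {1..})"
proof -
  define P where "P = {p::nat. prime p}"
  define f where "f = (\<lambda>(p, k). 1 / of_nat p / of_nat (p ^ k) powr w)"
  have inj: "inj_on (\<lambda>(p, k). p ^ k) (P \<times> {1..})"
    by (auto simp: inj_on_def P_def prime_power_inj'')
  have "(\<lambda>n. norm (1 / of_nat n powr w)) summable_on (\<lambda>(p, k). p ^ k) ` (P \<times> {1..})"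
    by (rule summable_on_subset_banach[OF riemann_zeta_has_sum(2)[OF assms]])
       (auto simp: P_def Suc_le_eq prime_gt_0_nat)
  then have zeta_part: "(\<lambda>(p, k). norm (1 / of_nat (p ^ k) powr w)) summable_on P \<times> {1..}"
    by (subst (asm) summable_on_reindex[OF inj]) (simp add: o_def case_prod_unfold del: of_nat_power)
  have bound: "norm (f (p, k)) \<le> norm (1 / of_nat (p ^ k) powr w)" if "p \<in> P" for p k
  proof -
    have "1 / real p \<le> 1"
      using that prime_ge_1_nat[of p] by (simp add: P_def)
    then show ?thesis
      using divide_right_mono[of "1 / real p" 1 "norm (of_nat (p ^ k) powr w)"]
      by (simp add: f_def norm_divide norm_mult del: of_nat_power)
  qed
  have abs: "(\<lambda>x. norm (f x)) summable_on P \<times> {1..}"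
    using zeta_part by (rule summable_on_comparison_test) (use bound in auto)
  then show "(\<lambda>(p, k). norm (1 / of_nat p / of_nat (p ^ k) powr w)) summable_on ({p. prime p} \<times> {1..})"
    by (simp add: f_def P_def case_prod_unfold)
  have "((\<lambda>p. 1 / (of_nat p powr (w + 1) - of_nat p)) has_sum (\<Sum>\<^sub>\<infinity>x\<in>P \<times> {1..}. f x)) P"
  proof (rule has_sum_Sigma'[OF has_sum_infsum[OF abs_summable_summable[OF abs]]])
    show "((\<lambda>k. f (p, k)) has_sum 1 / (of_nat p powr (w + 1) - of_nat p)) {1..}" if "p \<in> P" for p
      unfolding f_def prod.case
      using that assms by (intro prime_power_series_has_sum) (auto simp: P_def prime_gt_Suc_0_nat)
  qed
  then have "F_prime w = (\<Sum>\<^sub>\<infinity>x\<in>P \<times> {1..}. f x)"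
    unfolding F_prime_def P_def by (rule infsumI)
  then show "((\<lambda>(p, k). 1 / of_nat p / of_nat (p ^ k) powr w) has_sum F_prime w) ({p. prime p} \<times> {1..})"
    using has_sum_infsum[OF abs_summable_summable[OF abs]] by (simp add: f_def P_def)
qed

definition prime_power_splittings :: "nat \<Rightarrow> nat \<Rightarrow> ((nat \<times> nat) \<times> nat) set" where
  "prime_power_splittings p N = {((k, m1), m2). k \<ge> 1 \<and> m1 \<ge> 1 \<and> m2 \<ge> 1 \<and> p ^ k * m1 * m2 = N}"

lemma bij_betw_prime_power_splittings:
  assumes "prime p" "N > 0"
  shows "bij_betw (\<lambda>((k, m1), m2). (p ^ k * m1, k)) (prime_power_splittings p N)
           (SIGMA d:{d. d dvd N \<and> d > 0}. {1..multiplicity p d})"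
proof (rule bij_betwI[where g="\<lambda>(d, k). ((k, d div p ^ k), N div d)"])
  have p0: "p > 0"
    using assms(1) by (simp add: prime_gt_0_nat)
  have le_multiplicity_iff: "k \<le> multiplicity p d \<longleftrightarrow> p ^ k dvd d" if "d > 0" for d k
    using that assms(1) by (intro power_dvd_iff_le_multiplicity[symmetric]) (auto simp: not_prime_unit)
  show "(\<lambda>((k, m1), m2). (p ^ k * m1, k)) \<in> prime_power_splittings p N \<rightarrow> (SIGMA d:{d. d dvd N \<and> d > 0}. {1..multiplicity p d})"
    by (auto simp: prime_power_splittings_def le_multiplicity_iff p0)
  show "(\<lambda>(d, k). ((k, d div p ^ k), N div d)) \<in> (SIGMA d:{d. d dvd N \<and> d > 0}. {1..multiplicity p d}) \<rightarrow> prime_power_splittings p N"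
    using assms(2) by (auto simp: prime_power_splittings_def le_multiplicity_iff p0 Suc_le_eq
        dvd_div_eq_0_iff elim!: dvdE)
  show "(\<lambda>(d, k). ((k, d div p ^ k), N div d)) ((\<lambda>((k, m1), m2). (p ^ k * m1, k)) x) = x"
    if "x \<in> prime_power_splittings p N" for x
    using that p0 by (auto simp: prime_power_splittings_def)
  show "(\<lambda>((k, m1), m2). (p ^ k * m1, k)) ((\<lambda>(d, k). ((k, d div p ^ k), N div d)) y) = y"
    if "y \<in> (SIGMA d:{d. d dvd N \<and> d > 0}. {1..multiplicity p d})" for y
    using that by (auto simp: le_multiplicity_iff)
qed

lemma sum_multiplicity_divisors:
  assumes "prime p" "N > 0"
  shows "2 * (\<Sum>d | d dvd N \<and> d > 0. multiplicity p d) = divisor_count N * multiplicity p N"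
proof -
  define D where "D = {d. d dvd N \<and> d > 0}"
  have complement: "N div d \<in> D \<and> N div (N div d) = d" if "d \<in> D" for d
  proof -
    from that obtain e where "N = d * e" "d > 0"
      by (auto simp: D_def)
    with assms(2) show ?thesis
      by (auto simp: D_def)
  qed
  have swap: "(\<Sum>d\<in>D. multiplicity p (N div d)) = (\<Sum>d\<in>D. multiplicity p d)"
    by (rule sum.reindex_bij_witness[where i="\<lambda>d. N div d" and j="\<lambda>d. N div d"]) (use complement in auto)
  have add: "multiplicity p d + multiplicity p (N div d) = multiplicity p N" if "d \<in> D" for d
    using that assms prime_elem_multiplicity_mult_distrib[of p d "N div d"]
    by (auto simp: D_def dvd_div_eq_0_iff)
  have "2 * (\<Sum>d\<in>D. multiplicity p d) = (\<Sum>d\<in>D. multiplicity p d + multiplicity p (N div d))"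
    by (simp add: sum.distrib swap)
  also have "\<dots> = (\<Sum>d\<in>D. multiplicity p N)"
    using add by simp
  finally show ?thesis
    by (simp add: D_def divisor_count_def)
qed

lemma card_prime_power_splittings:
  assumes "prime p" "N > 0"
  shows "finite (prime_power_splittings p N)"
    and "2 * card (prime_power_splittings p N) = divisor_count N * multiplicity p N"
proof -
  have fin: "finite {d. d dvd N \<and> d > 0}"
    using assms(2) by simp
  note bij = bij_betw_prime_power_splittings[OF assms]
  show "finite (prime_power_splittings p N)"
    using bij fin by (simp add: bij_betw_finite)
  show "2 * card (prime_power_splittings p N) = divisor_count N * multiplicity p N"
    using bij_betw_same_card[OF bij] sum_multiplicity_divisors[OF assms] fin
    by (simp add: card_SigmaI)
qed

lemma divisor_count_arith_deriv_eq_sum_splittings: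
  fixes w :: complex
  assumes "N > 0"
  shows "of_nat (divisor_count N * arith_deriv N) / of_nat N powr (w + 1)
       = 2 * (\<Sum>(p, t)\<in>(SIGMA p:prime_factors N. prime_power_splittings p N). 1 / of_nat p / of_nat N powr w)"
proof -
  have prime_factor: "prime p" "p dvd N" if "p \<in> prime_factors N" for p
    using that by auto
  have of_nat_div_prime: "of_nat (N div p) = (of_nat N / of_nat p :: complex)" if "p \<in> prime_factors N" for p
    using prime_factor[OF that] by (auto elim!: dvdE simp: prime_gt_0_nat)
  have "of_nat (divisor_count N * arith_deriv N)
      = (\<Sum>p\<in>prime_factors N. of_nat (divisor_count N * multiplicity p N) * (of_nat N / of_nat p) :: complex)"
    by (simp add: arith_deriv_def sum_distrib_left of_nat_div_prime mult.assoc)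
  also have "\<dots> = (\<Sum>p\<in>prime_factors N. of_nat (2 * card (prime_power_splittings p N)) * (of_nat N / of_nat p))"
    by (intro sum.cong) (simp_all add: card_prime_power_splittings(2) prime_factor assms)
  finally have "of_nat (divisor_count N * arith_deriv N) / of_nat N powr (w + 1)
      = 2 * (\<Sum>p\<in>prime_factors N. of_nat (card (prime_power_splittings p N)) / of_nat p / of_nat N powr w)"
    using assms by (simp add: sum_distrib_left sum_divide_distrib powr_add field_simps)
  also have "\<dots> = 2 * (\<Sum>(p, t)\<in>(SIGMA p:prime_factors N. prime_power_splittings p N). 1 / of_nat p / of_nat N powr w)"
    by (subst sum.Sigma[symmetric]) (simp_all add: card_prime_power_splittings(1) prime_factor assms)
  finally show ?thesis .
qed

lemma F_prime_zeta_squared_has_sum: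
  assumes "Re w > 1"
  shows "((\<lambda>(N, p, t). 1 / of_nat p / of_nat N powr w) has_sum F_prime w * riemann_zeta w ^ 2)
           (SIGMA N:{1..}. SIGMA p:prime_factors N. prime_power_splittings p N)"
proof -
  define f where "f = (\<lambda>(p, k). 1 / of_nat p / of_nat (p ^ k) powr w)"
  define z where "z = (\<lambda>n::nat. 1 / of_nat n powr w)"
  define P where "P = {p::nat. prime p}"
  have f: "(f has_sum F_prime w) (P \<times> {1..})" "(\<lambda>x. norm (f x)) summable_on P \<times> {1..}"
    using F_prime_has_sum[OF assms] by (simp_all add: f_def P_def case_prod_unfold)
  have z: "(z has_sum riemann_zeta w) {1..}" "(\<lambda>m. norm (z m)) summable_on {1..}"
    using riemann_zeta_has_sum[OF assms] by (simp_all add: z_def)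
  have fz: "((\<lambda>(x, m1). f x * z m1) has_sum F_prime w * riemann_zeta w) ((P \<times> {1..}) \<times> {1..})"
    "(\<lambda>y. norm ((\<lambda>(x, m1). f x * z m1) y)) summable_on (P \<times> {1..}) \<times> {1..}"
    using has_sum_mult_abs_summable[OF f(1) z(1) f(2) z(2)] by (simp_all add: case_prod_unfold)
  have "((\<lambda>(y, m2). (\<lambda>(x, m1). f x * z m1) y * z m2) has_sum F_prime w * riemann_zeta w * riemann_zeta w)
          (((P \<times> {1..}) \<times> {1..}) \<times> {1..})"
    by (rule has_sum_mult_abs_summable(1)[OF fz(1) z(1) fz(2) z(2)])
  also have "?this \<longleftrightarrow> ?thesis"
  proof (rule has_sum_reindex_bij_witness[where j="\<lambda>(((p, k), m1), m2). (p ^ k * m1 * m2, p, (k, m1), m2)"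
        and i="\<lambda>(N, p, (k, m1), m2). (((p, k), m1), m2)"])
  qed (auto simp: P_def f_def z_def prime_power_splittings_def power2_eq_square of_nat_mult_powr
        prime_gt_0_nat Suc_le_eq in_prime_factors_iff simp del: of_nat_mult of_nat_power)
  finally show ?thesis .
qed

theorem mainTheorem18:
  fixes s :: complex
  assumes "Re s > 2"
  shows "(\<lambda>n. of_nat (divisor_count (Suc n) * arith_deriv (Suc n)) / of_nat (Suc n) powr s)
           sums (2 * riemann_zeta (s - 1) ^ 2 * F_prime (s - 1))"
proof -
  define w where "w = s - 1"
  have w: "Re w > 1" and s: "s = w + 1"
    using assms by (simp_all add: w_def)
  define S where "S = (\<lambda>N. SIGMA p:prime_factors N. prime_power_splittings p N)"
  have "((\<lambda>N. \<Sum>(p, t)\<in>S N. 1 / of_nat p / of_nat N powr w) has_sum F_prime w * riemann_zeta w ^ 2) {1..}"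
  proof -
    have "finite (S N)" if "N \<in> {1..}" for N
      using that by (auto simp: S_def intro!: finite_SigmaI card_prime_power_splittings(1))
    then show ?thesis
      using has_sum_Sigma_finite_fibres[OF F_prime_zeta_squared_has_sum[OF w, folded S_def]] by simp
  qed
  then have "((\<lambda>N. 2 * (\<Sum>(p, t)\<in>S N. 1 / of_nat p / of_nat N powr w))
               has_sum 2 * (F_prime w * riemann_zeta w ^ 2)) {1..}"
    by (rule has_sum_cmult_right)
  also have "?this \<longleftrightarrow> ((\<lambda>N. of_nat (divisor_count N * arith_deriv N) / of_nat N powr s)
               has_sum 2 * (F_prime w * riemann_zeta w ^ 2)) {1..}"
    unfolding s S_def by (intro has_sum_cong divisor_count_arith_deriv_eq_sum_splittings[symmetric]) simp
  finally have "(\<lambda>n. of_nat (divisor_count (Suc n) * arith_deriv (Suc n)) / of_nat (Suc n) powr s)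
                 sums (2 * (F_prime w * riemann_zeta w ^ 2))"
    by (intro has_sum_imp_sums has_sum_shift_Suc[THEN iffD2])
  then show ?thesis
    by (simp add: w_def mult_ac)
qed

end
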